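(* Let $\psi$ be a saturation with saturation level $\alpha>0$, let $u:[0,L]\to\mathbb{R}$ be a given velocity, and consider the explicit finite-volume scheme for $\partial_t\rho+\partial_x(\rho\psi(\rho)u(x))=0$ on $(0,L)$ described in the context. Fix $n$ and suppose $0\le\rho_i^n\le\alpha$ for all $i$. Then the updated values satisfy $0\le\rho_i^{n+1}\le\alpha$ for all $i$, provided $$\Delta t\le \Gamma\,\frac{\Delta x}{2\max_i|u_{i+1/2}|},\qquad \Gamma=\min\Big\{\frac{1}{\psi(0)},\gamma\Big\},\qquad \gamma=\inf_{s\in(0,\alpha)}\frac{\alpha-s}{\alpha\psi(s)}.$$
   Context: A saturation is a continuous function $\psi:[0,\infty)\to\mathbb{R}$ that is non-increasing and for which there is $\alpha>0$ (the saturation level) with $\psi(\alpha)=0$ and $(\alpha-s)\psi(s)>0$ for $s\neq\alpha$. Discretisation: $\Delta x=L/M$, cells $C_i=(x_{i-1/2},x_{i+1/2})$ with centres $x_i=\Delta x(i-1/2)$, $i=1,\dots,M$; time steps $t^n=n\Delta t$; $\rho_i^n$ is the value on cell $C_i$ at time $t^n$. The scheme is $$\frac{\rho_i^{n+1}-\rho_i^n}{\Delta t}+\frac{F_{i+1/2}^n-F_{i-1/2}^n}{\Delta x}=0,\qquad F_{i+1/2}^n=\rho_i^E\psi_{i+1}^W u_{i+1/2}^++\rho_{i+1}^W\psi_i^E u_{i+1/2}^-,$$ with no-flux boundary conditions $F_{1/2}^n=F_{M+1/2}^n=0$, where $u_{i+1/2}=u(x_{i+1/2})$, $a^+=\max\{a,0\}$,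 $a^-=\min\{a,0\}$, $\rho_i^E=\rho_i^n+\frac{\Delta x}{2}(\rho_x)_i^n$, $\rho_i^W=\rho_i^n-\frac{\Delta x}{2}(\rho_x)_i^n$, $\psi_i^E=\psi(\rho_i^E)$, $\psi_i^W=\psi(\rho_i^W)$, and $$(\rho_x)_i^n=\mathrm{minmod}\Big(\theta\frac{\rho_{i+1}^n-\rho_i^n}{\Delta x},\frac{\rho_{i+1}^n-\rho_{i-1}^n}{2\Delta x},\theta\frac{\rho_i^n-\rho_{i-1}^n}{\Delta x}\Big),\quad \theta=2,$$ where $\mathrm{minmod}(a,b,c)=\min(a,b,c)$ if $a,b,c>0$, $\max(a,b,c)$ if $a,b,c<0$, and $0$ otherwise. The hypothesis "$0\le\rho_i^n\le\alpha$ for all $i$" applies to all values entering the slope computations. *)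

theory Defs
  imports "HOL-Analysis.Analysis"
begin

definition saturation :: "(real \<Rightarrow> real) \<Rightarrow> real \<Rightarrow> bool" where
  "saturation psi alpha \<longleftrightarrow>
     continuous_on {0..} psi \<and>
     (\<forall>s t. 0 \<le> s \<longrightarrow> s \<le> t \<longrightarrow> psi t \<le> psi s) \<and>
     alpha > 0 \<and> psi alpha = 0 \<and>
     (\<forall>s. 0 \<le> s \<longrightarrow> s \<noteq> alpha \<longrightarrow> (alpha - s) * psi s > 0)"

definition minmod3 :: "real \<Rightarrow> real \<Rightarrow> real \<Rightarrow> real" where
  "minmod3 a b c =
     (if a > 0 \<and> b > 0 \<and> c > 0 then min a (min b c)
      else if a < 0 \<and> b < 0 \<and> c < 0 then max a (max b c)
      else 0)"

text \<open>Cell values are rho i; cells are i = 1..M; the values rho 0 and rho (M+1)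
  are ghost values entering the slope computations at the boundary cells.\<close>

definition theta :: real where "theta = 2"

definition slope :: "real \<Rightarrow> (nat \<Rightarrow> real) \<Rightarrow> nat \<Rightarrow> real" where
  "slope dx rho i = minmod3 (theta * (rho (i+1) - rho i) / dx)
                            ((rho (i+1) - rho (i-1)) / (2 * dx))
                            (theta * (rho i - rho (i-1)) / dx)"

definition rhoE :: "real \<Rightarrow> (nat \<Rightarrow> real) \<Rightarrow> nat \<Rightarrow> real" where
  "rhoE dx rho i = rho i + dx / 2 * slope dx rho i"

definition rhoW :: "real \<Rightarrow> (nat \<Rightarrow> real) \<Rightarrow> nat \<Rightarrow> real" where
  "rhoW dx rho i = rho i - dx / 2 * slope dx rho i"

text \<open>Numerical flux at interface x_{i+1/2} = i*dx, for i = 0..M (no-flux at 0 and M).\<close>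
definition flux :: "(real \<Rightarrow> real) \<Rightarrow> (real \<Rightarrow> real) \<Rightarrow> real \<Rightarrow> nat \<Rightarrow> (nat \<Rightarrow> real) \<Rightarrow> nat \<Rightarrow> real" where
  "flux psi u L M rho i =
     (let dx = L / real M; ui = u (real i * dx) in
      if i = 0 \<or> i \<ge> M then 0
      else rhoE dx rho i * psi (rhoW dx rho (i+1)) * max ui 0
         + rhoW dx rho (i+1) * psi (rhoE dx rho i) * min ui 0)"

definition scheme_step :: "(real \<Rightarrow> real) \<Rightarrow> (real \<Rightarrow> real) \<Rightarrow> real \<Rightarrow> nat \<Rightarrow> real \<Rightarrow> (nat \<Rightarrow> real) \<Rightarrow> nat \<Rightarrow> real" where
  "scheme_step psi u L M dt rho i =
     rho i - dt / (L / real M) * (flux psi u L M rho i - flux psi u L M rho (i-1))"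

definition gamma_sat :: "(real \<Rightarrow> real) \<Rightarrow> real \<Rightarrow> real" where
  "gamma_sat psi alpha = Inf ((\<lambda>s. (alpha - s) / (alpha * psi s)) ` {0<..<alpha})"

definition Gamma_sat :: "(real \<Rightarrow> real) \<Rightarrow> real \<Rightarrow> real" where
  "Gamma_sat psi alpha = min (1 / psi 0) (gamma_sat psi alpha)"

definition umax :: "(real \<Rightarrow> real) \<Rightarrow> real \<Rightarrow> nat \<Rightarrow> real" where
  "umax u L M = Max ((\<lambda>i. \<bar>u (real i * (L / real M))\<bar>) ` {0..M})"

end

theory Submission
  imports Defs
begin

text \<open>Write \<open>E\<^sub>i\<close>, \<open>W\<^sub>i\<close> for the reconstructed values \<open>\<rho>\<^sub>i\<^sup>E\<close>, \<open>\<rho>\<^sub>i\<^sup>W\<close> and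
  \<open>c = \<Delta>t/\<Delta>x\<close>. Since \<open>\<rho>\<^sub>i = (E\<^sub>i + W\<^sub>i)/2\<close>, the update splits as
  \<open>(E\<^sub>i/2 - c F\<^sub>i\<^sub>+\<^sub>\<onehalf>) + (W\<^sub>i/2 + c F\<^sub>i\<^sub>-\<^sub>\<onehalf>)\<close>, and it suffices that each half
  lies in \<open>[0, \<alpha>/2]\<close>. The minmod limiter with \<open>\<theta> = 2\<close> keeps \<open>E\<^sub>i\<close> and \<open>W\<^sub>i\<close> between
  neighbouring cell values, hence in \<open>[0, \<alpha>]\<close>. The CFL condition then bounds each upwind flux:
  \<open>\<Gamma> \<le> 1/\<psi>(0)\<close> limits the outflow by the mass present in the half cell, and \<open>\<Gamma> \<le> \<gamma>\<close> limits
  the inflow by the free capacity \<open>\<alpha> - \<rho>\<close> of the receiving half cell.\<close>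

lemma minmod3_commute: "minmod3 a b c = minmod3 c b a"
  unfolding minmod3_def by auto

lemma minmod3_between_zero: "min 0 a \<le> minmod3 a b c \<and> minmod3 a b c \<le> max 0 a"
  unfolding minmod3_def by auto

lemma mult_between_zero:
  fixes k m a :: real
  assumes "k > 0" and "min 0 a \<le> m" and "m \<le> max 0 a"
  shows "min 0 (k * a) \<le> k * m \<and> k * m \<le> max 0 (k * a)"
  using assms
  by (cases "a \<ge> 0") (auto simp: min_def max_def mult_left_mono mult_le_0_iff zero_le_mult_iff)

lemma rhoE_between:
  assumes "dx > 0"
  shows "min (rho i) (rho (i+1)) \<le> rhoE dx rho i \<and> rhoE dx rho i \<le> max (rho i) (rho (i+1))"
proof -
  have "min 0 (dx/2 * (theta * (rho (i+1) - rho i) / dx)) \<le> dx/2 * slope dx rho i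
      \<and> dx/2 * slope dx rho i \<le> max 0 (dx/2 * (theta * (rho (i+1) - rho i) / dx))"
    unfolding slope_def using assms
    by (intro mult_between_zero minmod3_between_zero[THEN conjunct1] minmod3_between_zero[THEN conjunct2]) auto
  then show ?thesis
    using assms unfolding rhoE_def theta_def by (auto simp: min_def max_def split: if_splits)
qed

lemma rhoW_between:
  assumes "dx > 0"
  shows "min (rho (i-1)) (rho i) \<le> rhoW dx rho i \<and> rhoW dx rho i \<le> max (rho (i-1)) (rho i)"
proof -
  have "min 0 (dx/2 * (theta * (rho i - rho (i-1)) / dx)) \<le> dx/2 * slope dx rho i
      \<and> dx/2 * slope dx rho i \<le> max 0 (dx/2 * (theta * (rho i - rho (i-1)) / dx))"
    unfolding slope_def minmod3_commute[of "theta * (rho (i+1) - rho i) / dx"] using assms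
    by (intro mult_between_zero minmod3_between_zero[THEN conjunct1] minmod3_between_zero[THEN conjunct2]) auto
  then show ?thesis
    using assms unfolding rhoW_def theta_def by (auto simp: min_def max_def split: if_splits)
qed

lemma saturation_psi_nonneg:
  assumes "saturation psi alpha" and "0 \<le> s" and "s \<le> alpha"
  shows "0 \<le> psi s"
proof (cases "s = alpha")
  case False
  with assms have "(alpha - s) * psi s > 0" and "alpha - s > 0"
    unfolding saturation_def by auto
  then show ?thesis by (simp add: zero_less_mult_iff)
qed (use assms in \<open>simp add: saturation_def\<close>)

lemma saturation_psi_le_psi0:
  assumes "saturation psi alpha" and "0 \<le> s"
  shows "psi s \<le> psi 0"
  using assms unfolding saturation_def by auto

lemma saturation_psi0_pos:
  assumes "saturation psi alpha"
  shows "psi 0 > 0"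
proof -
  have "alpha > 0" and "(alpha - 0) * psi 0 > 0"
    using assms unfolding saturation_def by auto
  then show ?thesis by (simp add: zero_less_mult_iff)
qed

lemma gamma_sat_le:
  assumes sat: "saturation psi alpha" and s: "s \<in> {0<..<alpha}"
  shows "gamma_sat psi alpha \<le> (alpha - s) / (alpha * psi s)"
proof -
  have "bdd_below ((\<lambda>s. (alpha - s) / (alpha * psi s)) ` {0<..<alpha})"
  proof (rule bdd_belowI)
    fix y assume "y \<in> (\<lambda>s. (alpha - s) / (alpha * psi s)) ` {0<..<alpha}"
    then obtain t where "t \<in> {0<..<alpha}" and "y = (alpha - t) / (alpha * psi t)" by auto
    then show "0 \<le> y" using saturation_psi_nonneg[OF sat, of t] by simp
  qed
  then show ?thesis unfolding gamma_sat_def using s by (intro cInf_lower) auto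
qed

lemma Gamma_sat_mult_psi_le_one:
  assumes sat: "saturation psi alpha" and "0 \<le> lam" and "lam \<le> Gamma_sat psi alpha"
    and "0 \<le> s"
  shows "lam * psi s \<le> 1"
proof -
  have "lam * psi s \<le> lam * psi 0"
    using assms saturation_psi_le_psi0[OF sat] by (simp add: mult_left_mono)
  also have "\<dots> \<le> 1"
    using assms saturation_psi0_pos[OF sat] unfolding Gamma_sat_def by (simp add: pos_le_divide_eq)
  finally show ?thesis .
qed

lemma Gamma_sat_mult_psi_le_gap:
  assumes sat: "saturation psi alpha" and lam: "0 \<le> lam" "lam \<le> Gamma_sat psi alpha"
    and s: "0 \<le> s" "s \<le> alpha"
  shows "lam * alpha * psi s \<le> alpha - s"
proof -
  have alpha: "alpha > 0" using sat unfolding saturation_def by simp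
  consider "s = 0" | "s = alpha" | "s \<in> {0<..<alpha}" using s by fastforce
  then show ?thesis
  proof cases
    case 1
    then show ?thesis
      using Gamma_sat_mult_psi_le_one[OF sat lam, of 0] alpha
      by (simp add: mult.commute mult_left_le)
  next
    case 2
    then show ?thesis using sat unfolding saturation_def by simp
  next
    case 3
    then have "(alpha - s) * psi s > 0" and "alpha - s > 0"
      using sat unfolding saturation_def by auto
    then have "psi s > 0" by (simp add: zero_less_mult_iff)
    moreover have "lam \<le> (alpha - s) / (alpha * psi s)"
      using lam gamma_sat_le[OF sat 3] unfolding Gamma_sat_def by simp
    ultimately show ?thesis using alpha by (simp add: pos_le_divide_eq mult.assoc)
  qed
qed

lemma upwind_flux_bounds_nonneg_velocity:
  assumes sat: "saturation psi alpha" and a: "0 \<le> a" "a \<le> alpha" and b: "0 \<le> b" "b \<le> alpha"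
    and c: "0 \<le> c" and v: "0 \<le> v" and cfl: "2 * c * v \<le> Gamma_sat psi alpha"
  shows "0 \<le> c * (a * psi b * v)" and "2 * (c * (a * psi b * v)) \<le> a"
    and "2 * (c * (a * psi b * v)) \<le> alpha - b"
proof -
  define lam where "lam = 2 * c * v"
  have lam: "0 \<le> lam" "lam \<le> Gamma_sat psi alpha" unfolding lam_def using c v cfl by auto
  have psi_b: "0 \<le> psi b" using saturation_psi_nonneg[OF sat b] .
  have eq: "2 * (c * (a * psi b * v)) = a * (lam * psi b)" unfolding lam_def by simp
  show "0 \<le> c * (a * psi b * v)" using a c v psi_b by simp
  have "a * (lam * psi b) \<le> a * 1"
    using Gamma_sat_mult_psi_le_one[OF sat lam b(1)] a by (intro mult_left_mono) auto
  then show "2 * (c * (a * psi b * v)) \<le> a" using eq by linarith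
  have "a * (lam * psi b) \<le> alpha * (lam * psi b)"
    using a lam psi_b by (intro mult_right_mono) auto
  also have "\<dots> \<le> alpha - b" using Gamma_sat_mult_psi_le_gap[OF sat lam b] by (simp add: ac_simps)
  finally show "2 * (c * (a * psi b * v)) \<le> alpha - b" using eq by linarith
qed

lemma upwind_flux_bounds:
  assumes sat: "saturation psi alpha" and a: "0 \<le> a" "a \<le> alpha" and b: "0 \<le> b" "b \<le> alpha"
    and c: "0 \<le> c" and cfl: "2 * c * \<bar>v\<bar> \<le> Gamma_sat psi alpha"
  defines "F \<equiv> a * psi b * max v 0 + b * psi a * min v 0"
  shows "2 * (c * F) \<le> a" and "2 * (c * F) \<le> alpha - b"
    and "- (2 * (c * F)) \<le> b" and "- (2 * (c * F)) \<le> alpha - a"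
proof -
  have "2 * (c * F) \<le> a \<and> 2 * (c * F) \<le> alpha - b \<and> - (2 * (c * F)) \<le> b \<and> - (2 * (c * F)) \<le> alpha - a"
  proof (cases "v \<ge> 0")
    case True
    then have "F = a * psi b * v" unfolding F_def by simp
    with upwind_flux_bounds_nonneg_velocity[OF sat a b c True] cfl True a b show ?thesis by auto
  next
    case False
    then have "c * F = - (c * (b * psi a * (- v)))" unfolding F_def by simp
    with upwind_flux_bounds_nonneg_velocity[OF sat b a c, of "- v"] cfl False a b show ?thesis by auto
  qed
  then show "2 * (c * F) \<le> a" and "2 * (c * F) \<le> alpha - b"
    and "- (2 * (c * F)) \<le> b" and "- (2 * (c * F)) \<le> alpha - a" by auto
qed

lemma flux_bounds:
  assumes sat: "saturation psi alpha" and dx: "L / real M > 0" and c: "0 \<le> c"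
    and cfl: "2 * c * \<bar>u (real i * (L / real M))\<bar> \<le> Gamma_sat psi alpha"
    and rho: "0 \<le> rho i" "rho i \<le> alpha" "0 \<le> rho (i+1)" "rho (i+1) \<le> alpha"
  defines "E \<equiv> rhoE (L / real M) rho i" and "W \<equiv> rhoW (L / real M) rho (i+1)"
  shows "2 * (c * flux psi u L M rho i) \<le> E" and "2 * (c * flux psi u L M rho i) \<le> alpha - W"
    and "- (2 * (c * flux psi u L M rho i)) \<le> W"
    and "- (2 * (c * flux psi u L M rho i)) \<le> alpha - E"
proof -
  have E: "0 \<le> E" "E \<le> alpha"
    using rhoE_between[OF dx, of rho i] rho unfolding E_def by auto
  have W: "0 \<le> W" "W \<le> alpha"
    using rhoW_between[OF dx, of rho "i+1"] rho unfolding W_def by auto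
  have "2 * (c * flux psi u L M rho i) \<le> E \<and> 2 * (c * flux psi u L M rho i) \<le> alpha - W
      \<and> - (2 * (c * flux psi u L M rho i)) \<le> W \<and> - (2 * (c * flux psi u L M rho i)) \<le> alpha - E"
  proof (cases "i = 0 \<or> M \<le> i")
    case True
    then show ?thesis using E W unfolding flux_def by simp
  next
    case False
    then have "flux psi u L M rho i
        = E * psi W * max (u (real i * (L / real M))) 0 + W * psi E * min (u (real i * (L / real M))) 0"
      unfolding flux_def E_def W_def Let_def by simp
    then show ?thesis using upwind_flux_bounds[OF sat E W c cfl] by simp
  qed
  then show "2 * (c * flux psi u L M rho i) \<le> E" and "2 * (c * flux psi u L M rho i) \<le> alpha - W"
    and "- (2 * (c * flux psi u L M rho i)) \<le> W"
    and "- (2 * (c * flux psi u L M rho i)) \<le> alpha - E" by auto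
qed

lemma abs_le_umax:
  assumes "k \<le> M"
  shows "\<bar>u (real k * (L / real M))\<bar> \<le> umax u L M"
  unfolding umax_def using assms by (intro Max_ge) auto

lemma interface_cfl:
  fixes G :: real
  assumes "L > 0" and "M \<ge> 1" and "dt \<ge> 0" and "k \<le> M"
    and cfl: "dt * (2 * umax u L M) \<le> G * (L / real M)"
  shows "2 * (dt / (L / real M)) * \<bar>u (real k * (L / real M))\<bar> \<le> G"
proof -
  have dx: "L / real M > 0" using assms by simp
  have "dt * (2 * \<bar>u (real k * (L / real M))\<bar>) \<le> dt * (2 * umax u L M)"
    using abs_le_umax[OF \<open>k \<le> M\<close>] \<open>dt \<ge> 0\<close> by (intro mult_left_mono) auto
  also have "\<dots> \<le> G * (L / real M)" by (rule cfl)
  finally have "dt * (2 * \<bar>u (real k * (L / real M))\<bar>) / (L / real M) \<le> G"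
    using dx by (simp only: pos_divide_le_eq)
  moreover have "2 * (dt / (L / real M)) * \<bar>u (real k * (L / real M))\<bar>
      = dt * (2 * \<bar>u (real k * (L / real M))\<bar>) / (L / real M)" by simp
  ultimately show ?thesis by linarith
qed

theorem proposition2p4:
  fixes psi u :: "real \<Rightarrow> real" and alpha L dt :: real and M :: nat and rho :: "nat \<Rightarrow> real"
  assumes sat: "saturation psi alpha"
    and L: "L > 0" and M: "M \<ge> 1" and dt: "dt > 0"
    and bounds: "\<forall>i \<in> {0..M+1}. 0 \<le> rho i \<and> rho i \<le> alpha"
    and cfl: "dt * (2 * umax u L M) \<le> Gamma_sat psi alpha * (L / real M)"
  shows "\<forall>i \<in> {1..M}. 0 \<le> scheme_step psi u L M dt rho i \<and> scheme_step psi u L M dt rho i \<le> alpha"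
proof
  fix i assume i: "i \<in> {1..M}"
  define dx where "dx = L / real M"
  define c where "c = dt / dx"
  have dx: "dx > 0" and c: "c \<ge> 0" using L M dt unfolding dx_def c_def by auto
  have cfl_at: "2 * c * \<bar>u (real k * dx)\<bar> \<le> Gamma_sat psi alpha" if "k \<le> M" for k
    using interface_cfl[OF L M _ that cfl] dt unfolding c_def dx_def by simp
  have "i \<le> M" and "i - 1 \<le> M" and pred_succ: "i - 1 + 1 = i" using i by auto
  have rho: "0 \<le> rho (i - 1)" "rho (i - 1) \<le> alpha" "0 \<le> rho i" "rho i \<le> alpha"
    "0 \<le> rho (i + 1)" "rho (i + 1) \<le> alpha"
    using bounds i by auto
  note right = flux_bounds[where u = u and i = i and rho = rho, OF sat dx[unfolded dx_def] c
      cfl_at[OF \<open>i \<le> M\<close>, unfolded dx_def] rho(3-6), folded dx_def]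
  note left = flux_bounds[where u = u and i = "i - 1" and rho = rho, unfolded pred_succ,
      OF sat dx[unfolded dx_def] c cfl_at[OF \<open>i - 1 \<le> M\<close>, unfolded dx_def] rho(1-4), folded dx_def]
  have "scheme_step psi u L M dt rho i = rho i - c * flux psi u L M rho i + c * flux psi u L M rho (i-1)"
    unfolding scheme_step_def c_def dx_def by (simp add: algebra_simps)
  moreover have "rhoE dx rho i + rhoW dx rho i = 2 * rho i"
    unfolding rhoE_def rhoW_def by simp
  ultimately show "0 \<le> scheme_step psi u L M dt rho i \<and> scheme_step psi u L M dt rho i \<le> alpha"
    using right(1,4) left(2,3) by auto
qed

end
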